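(* Let $\mathbb{X}$ be a Banach space, $\varphi:\mathbb{X}\to\mathbb{R}\cup\{+\infty\}$ a proper lower semicontinuous function, $\mathbf{S}_\varphi:=\{x:\varphi(x)\le0\}$, $\tau>0$ and $x\in\mathbf{S}_\varphi$. Then $$\mathbf{e}\big(\{h\in\mathbb{X}:\varphi'_H(x;h)\le1\},\ \mathbf{T}^{\mathbf B}(\mathbf{S}_\varphi,x)\big)\le\tau$$ holds if and only if $$\mathbf{d}\big(h,\mathbf{T}^{\mathbf B}(\mathbf{S}_\varphi,x)\big)\le\tau\max\{\varphi'_H(x;h),0\}\quad\text{for all }h\in\mathbb{X}.$$
   Context: $\mathbf{d}(x,D):=\inf\{\|x-y\|:y\in D\}$. Excess: $\mathbf{e}(C,D):=\sup_{x\in C}\mathbf{d}(x,D)$, with $\mathbf{e}(\emptyset,D)=0$ if $D\ne\emptyset$ and $=\infty$ otherwise. $\varphi'_H(x;h):=\liminf_{t\to0^+,\,h'\to h}\frac{\varphi(x+th')-\varphi(x)}{t}$. Bouligand tangent cone $\mathbf{T}^{\mathbf B}(C,c)$: the set of all $v$ such that there exist $v_n\to v$, $t_n\downarrow0$ with $c+t_nv_n\in C$ for all $n$. *)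

theory Defs
  imports "HOL-Analysis.Analysis"
begin

text \<open>Functions with values in R \<union> {+\<infinity>} are modelled as ereal-valued functions
  that never take the value -\<infinity>.\<close>

definition proper_fun :: "('a \<Rightarrow> ereal) \<Rightarrow> bool" where
  "proper_fun f \<longleftrightarrow> (\<forall>x. f x \<noteq> -\<infinity>) \<and> (\<exists>x. f x \<noteq> \<infinity>)"

definition lsc_fun :: "('a::topological_space \<Rightarrow> ereal) \<Rightarrow> bool" where
  "lsc_fun f \<longleftrightarrow> (\<forall>x. f x \<le> Liminf (at x) f)"

text \<open>Distance from a point to a set: inf of norms (= +\<infinity> for the empty set).\<close>
definition dset :: "'a::real_normed_vector \<Rightarrow> 'a set \<Rightarrow> ereal" where
  "dset x D = (INF y\<in>D. ereal (norm (x - y)))"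

definition excess :: "'a::real_normed_vector set \<Rightarrow> 'a set \<Rightarrow> ereal" where
  "excess C D = (if C = {} then (if D \<noteq> {} then 0 else \<infinity>) else (SUP x\<in>C. dset x D))"

definition hadamard_lower :: "('a::real_normed_vector \<Rightarrow> ereal) \<Rightarrow> 'a \<Rightarrow> 'a \<Rightarrow> ereal" where
  "hadamard_lower f x h =
     Liminf (at_right (0::real) \<times>\<^sub>F nhds h) (\<lambda>(t, h'). (f (x + t *\<^sub>R h') - f x) / ereal t)"

definition bouligand_cone :: "'a::real_normed_vector set \<Rightarrow> 'a \<Rightarrow> 'a set" where
  "bouligand_cone C c = {v. \<exists>vs ts. vs \<longlonglongrightarrow> v \<and> ts \<longlonglongrightarrow> 0 \<and> (\<forall>n. ts n > (0::real))
       \<and> (\<forall>n. c + ts n *\<^sub>R vs n \<in> C)}"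

end

theory Submission
  imports Defs
begin

text \<open>Both sides of the equivalence are positively homogeneous in \<open>h\<close>: the Bouligand cone is a
  cone, so \<open>dset (s h) T = s \<cdot> dset h T\<close>, and the lower Hadamard derivative satisfies
  \<open>\<phi>'(x; s h) \<le> s \<cdot> \<phi>'(x; h)\<close>. Hence the bound \<open>dset h T \<le> \<tau>\<close> on the sublevel set
  \<open>{\<phi>'(x; \<cdot>) \<le> 1}\<close> rescales to \<open>dset h T \<le> \<tau> \<cdot> \<phi>'(x; h)\<close> when \<open>\<phi>'(x; h) > 0\<close>, and to
  \<open>dset h T \<le> \<tau> / s\<close> for every \<open>s > 0\<close> when \<open>\<phi>'(x; h) \<le> 0\<close>.\<close>

lemma Liminf_filterlim_le:
  assumes "filterlim m G F"
  shows "Liminf G g \<le> Liminf F (\<lambda>z. g (m z))"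
proof -
  have "Liminf G g \<le> Liminf (filtermap m F) g"
    unfolding Liminf_def using assms
    by (intro SUP_subset_mono) (auto simp: filterlim_def le_filter_def)
  also have "\<dots> \<le> Liminf F (\<lambda>z. g (m z))"
    by (rule Liminf_filtermap_le)
  finally show ?thesis .
qed

lemma bouligand_cone_zero:
  assumes "x \<in> C"
  shows "0 \<in> bouligand_cone C x"
  unfolding bouligand_cone_def
  by (rule CollectI, rule exI[of _ "\<lambda>n. 0"], rule exI[of _ "\<lambda>n. inverse (real (Suc n))"])
     (intro conjI allI LIMSEQ_inverse_real_of_nat tendsto_const, simp_all add: assms)

lemma bouligand_cone_scaleR:
  assumes "v \<in> bouligand_cone C x" "s > 0"
  shows "s *\<^sub>R v \<in> bouligand_cone C x"
proof -
  from assms(1) obtain vs ts where h: "vs \<longlonglongrightarrow> v" "ts \<longlonglongrightarrow> 0" "\<forall>n. ts n > (0::real)"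
    "\<forall>n. x + ts n *\<^sub>R vs n \<in> C" unfolding bouligand_cone_def by blast
  have "(\<lambda>n. s *\<^sub>R vs n) \<longlonglongrightarrow> s *\<^sub>R v" by (intro tendsto_intros h)
  moreover have "(\<lambda>n. ts n / s) \<longlonglongrightarrow> 0" using tendsto_divide_zero[OF h(2)] by simp
  moreover have "\<forall>n. ts n / s > 0" using h(3) assms(2) by simp
  moreover have "\<forall>n. x + (ts n / s) *\<^sub>R (s *\<^sub>R vs n) \<in> C" using h(4) assms(2) by simp
  ultimately show ?thesis unfolding bouligand_cone_def by blast
qed

lemma dset_nonneg: "0 \<le> dset h D"
  unfolding dset_def by (rule INF_greatest) simp

lemma dset_le_norm: "y \<in> D \<Longrightarrow> dset h D \<le> ereal (norm (h - y))"
  unfolding dset_def by (rule INF_lower)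

lemma dset_scaleR_cone:
  assumes cone: "\<And>v s. v \<in> K \<Longrightarrow> s > 0 \<Longrightarrow> s *\<^sub>R v \<in> K" and "s > 0"
  shows "ereal s * dset h K \<le> dset (s *\<^sub>R h) K"
  unfolding dset_def[of "s *\<^sub>R h"]
proof (rule INF_greatest)
  fix y assume "y \<in> K"
  then have "dset h K \<le> ereal (norm (h - (1/s) *\<^sub>R y))"
    using cone \<open>s > 0\<close> by (intro dset_le_norm) simp
  then have "ereal s * dset h K \<le> ereal s * ereal (norm (h - (1/s) *\<^sub>R y))"
    using \<open>s > 0\<close> by (intro ereal_mult_left_mono) auto
  also have "\<dots> = ereal (s * norm (h - (1/s) *\<^sub>R y))" by simp
  also have "s * norm (h - (1/s) *\<^sub>R y) = norm (s *\<^sub>R (h - (1/s) *\<^sub>R y))"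
    using \<open>s > 0\<close> by simp
  also have "s *\<^sub>R (h - (1/s) *\<^sub>R y) = s *\<^sub>R h - y"
    using \<open>s > 0\<close> by (simp add: algebra_simps)
  finally show "ereal s * dset h K \<le> ereal (norm (s *\<^sub>R h - y))" .
qed

lemma excess_le_iff:
  assumes "D \<noteq> {}" "0 \<le> e"
  shows "excess C D \<le> e \<longleftrightarrow> (\<forall>h\<in>C. dset h D \<le> e)"
  using assms unfolding excess_def by (auto intro: SUP_least SUP_upper order_trans)

lemma filterlim_rescale_at_right_nhds:
  fixes s :: real and h :: "'a::real_normed_vector"
  assumes "s > 0"
  shows "filterlim (\<lambda>(t, h'). (t / s, s *\<^sub>R h'))
           (at_right 0 \<times>\<^sub>F nhds (s *\<^sub>R h)) (at_right 0 \<times>\<^sub>F nhds h)"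
  unfolding case_prod_unfold
proof (rule filterlim_Pair)
  let ?F = "at_right (0::real) \<times>\<^sub>F nhds h"
  have fst: "filterlim fst (at_right (0::real)) ?F" by (rule filterlim_fst)
  show "filterlim (\<lambda>z. fst z / s) (at_right 0) ?F"
  proof (rule tendsto_imp_filterlim_at_right)
    have "(fst \<longlongrightarrow> 0) ?F" using filterlim_mono[OF fst at_within_le_nhds order_refl] .
    then show "((\<lambda>z. fst z / s) \<longlongrightarrow> 0) ?F" by (rule tendsto_divide_zero)
    have "eventually (\<lambda>z. fst z > 0) ?F"
      using fst unfolding filterlim_at by (elim conjE) (erule eventually_mono, simp)
    then show "eventually (\<lambda>z. fst z / s > 0) ?F" by eventually_elim (use assms in auto)
  qed
  show "filterlim (\<lambda>z. s *\<^sub>R snd z) (nhds (s *\<^sub>R h)) ?F"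
    by (intro tendsto_intros filterlim_snd)
qed

lemma hadamard_lower_scaleR_le:
  assumes "s > 0"
  shows "hadamard_lower \<phi> x (s *\<^sub>R h) \<le> ereal s * hadamard_lower \<phi> x h"
proof -
  define g where "g = (\<lambda>(t::real, h'). (\<phi> (x + t *\<^sub>R h') - \<phi> x) / ereal t)"
  define F where "F = at_right (0::real) \<times>\<^sub>F nhds h"
  have "hadamard_lower \<phi> x (s *\<^sub>R h) = Liminf (at_right 0 \<times>\<^sub>F nhds (s *\<^sub>R h)) g"
    unfolding hadamard_lower_def g_def ..
  also have "\<dots> \<le> Liminf F (\<lambda>(t, h'). g (t / s, s *\<^sub>R h'))"
    using Liminf_filterlim_le[OF filterlim_rescale_at_right_nhds[OF assms]]
    unfolding F_def case_prod_unfold .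
  also have "\<dots> = Liminf F (\<lambda>z. ereal s * g z)"
  proof (rule Liminf_eq)
    have "eventually (\<lambda>z. fst z > 0) F"
      using filterlim_fst[of "at_right (0::real)" "nhds h"]
      unfolding F_def filterlim_at by (elim conjE) (erule eventually_mono, simp)
    then show "eventually (\<lambda>z. (case z of (t, h') \<Rightarrow> g (t / s, s *\<^sub>R h')) = ereal s * g z) F"
    proof eventually_elim
      case (elim z)
      obtain t h' where z: "z = (t, h')" by (cases z)
      have "a / ereal (t / s) = ereal s * (a / ereal t)" for a :: ereal
        using elim assms z by (simp add: divide_ereal_def mult_ac divide_inverse)
      then show ?case using assms z by (simp add: g_def)
    qed
  qed
  also have "\<dots> = ereal s * Liminf F g"
    by (rule Liminf_ereal_mult_left) (use assms in \<open>auto simp: F_def prod_filter_eq_bot\<close>)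
  also have "Liminf F g = hadamard_lower \<phi> x h"
    unfolding hadamard_lower_def g_def F_def ..
  finally show ?thesis .
qed

lemma homogeneous_bound_iff_sublevel_bound:
  fixes f d :: "'a::real_vector \<Rightarrow> ereal"
  assumes f_hom: "\<And>s h. s > 0 \<Longrightarrow> f (s *\<^sub>R h) \<le> ereal s * f h"
    and d_hom: "\<And>s h. s > 0 \<Longrightarrow> ereal s * d h \<le> d (s *\<^sub>R h)"
    and d_nonneg: "\<And>h. 0 \<le> d h"
    and "\<tau> > 0"
  shows "(\<forall>h. f h \<le> 1 \<longrightarrow> d h \<le> ereal \<tau>) \<longleftrightarrow> (\<forall>h. d h \<le> ereal \<tau> * max (f h) 0)"
proof
  assume sub: "\<forall>h. f h \<le> 1 \<longrightarrow> d h \<le> ereal \<tau>"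
  show "\<forall>h. d h \<le> ereal \<tau> * max (f h) 0"
  proof
    fix h
    have rescaled: "d h \<le> ereal (\<tau> / s)" if "s > 0" "ereal s * f h \<le> 1" for s
    proof -
      have "ereal s * d h \<le> ereal \<tau>"
        using d_hom[OF \<open>s > 0\<close>] sub f_hom[OF \<open>s > 0\<close>, of h] that(2) by (meson order_trans)
      then show ?thesis
        using \<open>s > 0\<close> d_nonneg[of h] by (cases "d h") (auto simp: field_simps)
    qed
    consider "f h = \<infinity>" | "f h \<le> 0" | r where "f h = ereal r" "r > 0"
      by (cases "f h") force+
    then show "d h \<le> ereal \<tau> * max (f h) 0"
    proof cases
      case 1
      then show ?thesis using \<open>\<tau> > 0\<close> by simp
    next
      case 2
      have "d h \<le> 0 + ereal e" if "e > 0" for e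
      proof -
        have "ereal (\<tau> / e) * f h \<le> ereal (\<tau> / e) * 0"
          using 2 \<open>\<tau> > 0\<close> \<open>e > 0\<close> by (intro ereal_mult_left_mono) auto
        then have "ereal (\<tau> / e) * f h \<le> 1" by (rule order_trans) simp
        then show ?thesis using rescaled[of "\<tau> / e"] \<open>\<tau> > 0\<close> \<open>e > 0\<close> by simp
      qed
      then have "d h \<le> 0" by (rule ereal_le_epsilon2)
      then show ?thesis using 2 by (simp add: max_def)
    next
      case 3
      then have "d h \<le> ereal (\<tau> / (1 / r))" by (intro rescaled) (simp_all add: one_ereal_def)
      then show ?thesis using 3 by (simp add: max_def mult.commute)
    qed
  qed
next
  assume "\<forall>h. d h \<le> ereal \<tau> * max (f h) 0"
  moreover have "ereal \<tau> * max (f h) 0 \<le> ereal \<tau>" if "f h \<le> 1" for h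
    using ereal_mult_left_mono[of "max (f h) 0" 1 "ereal \<tau>"] that \<open>\<tau> > 0\<close> by simp
  ultimately show "\<forall>h. f h \<le> 1 \<longrightarrow> d h \<le> ereal \<tau>" by (meson order_trans)
qed

theorem proposition4p1:
  fixes \<phi> :: "'a::banach \<Rightarrow> ereal" and \<tau> :: real and x :: 'a
  assumes "proper_fun \<phi>" and "lsc_fun \<phi>" and "\<tau> > 0" and "x \<in> {y. \<phi> y \<le> 0}"
  shows "excess {h. hadamard_lower \<phi> x h \<le> 1} (bouligand_cone {y. \<phi> y \<le> 0} x) \<le> ereal \<tau>
     \<longleftrightarrow> (\<forall>h. dset h (bouligand_cone {y. \<phi> y \<le> 0} x)
              \<le> ereal \<tau> * max (hadamard_lower \<phi> x h) 0)"
proof -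
  define T where "T = bouligand_cone {y. \<phi> y \<le> 0} x"
  have "T \<noteq> {}"
    using bouligand_cone_zero[OF assms(4)] unfolding T_def by blast
  then have "excess {h. hadamard_lower \<phi> x h \<le> 1} T \<le> ereal \<tau>
      \<longleftrightarrow> (\<forall>h. hadamard_lower \<phi> x h \<le> 1 \<longrightarrow> dset h T \<le> ereal \<tau>)"
    using \<open>\<tau> > 0\<close> by (simp add: excess_le_iff)
  also have "\<dots> \<longleftrightarrow> (\<forall>h. dset h T \<le> ereal \<tau> * max (hadamard_lower \<phi> x h) 0)"
    using \<open>\<tau> > 0\<close> unfolding T_def
    by (intro homogeneous_bound_iff_sublevel_bound hadamard_lower_scaleR_le
        dset_scaleR_cone bouligand_cone_scaleR dset_nonneg)
  finally show ?thesis unfolding T_def .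
qed

end
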